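(* Let $(\mathfrak{X},\pi)$, $a$, $s$, $S$ be as in the context, let $\eta\in(0,\min\{1,\|a\|^{-1}\})$ and $\mathbb{H}_\eta:=\{z\in\mathbb{H}:\operatorname{Im}z\ge\eta,\ |z|\le\eta^{-1}\}$. Let $\mathfrak{B}_\eta$ be the set of functions $\mathfrak{u}:\mathbb{H}_\eta\to\mathcal{B}(\mathfrak{X},\mathbb{H})$ with $\inf_{z\in\mathbb{H}_\eta}\inf_x\operatorname{Im}\mathfrak{u}_x(z)\ge\eta^3/(2+\|S\|)^2$ and $\sup_{z\in\mathbb{H}_\eta}\|\mathfrak{u}(z)\|\le1/\eta$, and define $\Phi(\mathfrak{u})(z):=-1/(z+a+S\mathfrak{u}(z))$. Then $\Phi$ maps $\mathfrak{B}_\eta$ to itself and for all $\mathfrak{u},\mathfrak{w}\in\mathfrak{B}_\eta$ \[ \sup_{z\in\mathbb{H}_\eta}\sup_{x\in\mathfrak{X}}D\big(\Phi(\mathfrak{u})_x(z),\Phi(\mathfrak{w})_x(z)\big)\le\Big(1+\frac{\eta^2}{\|S\|}\Big)^{-2}\sup_{z\in\mathbb{H}_\eta}\sup_{x\in\mathfrak{X}}D\big(\mathfrak{u}_x(z),\mathfrak{w}_x(z)\big), \] where $D(\zeta,\omega):=\frac{|\zeta-\omega|^2}{(\operatorname{Im}\zeta)(\operatorname{Im}\omega)}$ for $\zeta,\omega\in\mathbb{H}$. In particular, the fixed point equation $\mathfrak{u}=\Phi(\mathfrak{u})$ has a unique solution $\mathfrak{u}\in\mathfrak{B}_\eta$.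
   Context: Let $(\mathfrak{X},\pi)$ be a measure space where $\pi$ is a probability measure; $\mathcal{B}(\mathfrak{X},\mathbb{D})$ denotes bounded measurable $\mathbb{D}$-valued functions with sup norm $\|w\|=\sup_x|w_x|$, and $\|S\|$ the induced operator norm. Let $a\in\mathcal{B}(\mathfrak{X},\mathbb{R})$, $s\in\mathcal{B}(\mathfrak{X}^2,[0,\infty))$ symmetric, $(Sw)_x=\int s_{xy}w_y\,\pi(\mathrm{d}y)$. $\mathbb{H}$ is the open complex upper half-plane. Operations on functions ($1/\cdot$, addition of $z$) are pointwise in $x$. (If $\|S\|=0$ the factor $(1+\eta^2/\|S\|)^{-2}$ is read as $0$.) *)

theory Defs
  imports "HOL-Probability.Probability"
begin

definition supnorm :: "'a measure \<Rightarrow> ('a \<Rightarrow> 'b::real_normed_vector) \<Rightarrow> real" where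
  "supnorm M w = (SUP x\<in>space M. norm (w x))"

definition bmeas :: "'a measure \<Rightarrow> 'b::{real_normed_vector, second_countable_topology} set
                     \<Rightarrow> ('a \<Rightarrow> 'b) set" where
  "bmeas M D = {w. w \<in> borel_measurable M \<and> bounded (w ` space M) \<and> (\<forall>x\<in>space M. w x \<in> D)}"

definition upper_half :: "complex set" where
  "upper_half = {z. Im z > 0}"

definition intop :: "'a measure \<Rightarrow> ('a \<Rightarrow> 'a \<Rightarrow> real) \<Rightarrow> ('a \<Rightarrow> complex) \<Rightarrow> 'a \<Rightarrow> complex" where
  "intop M s w = (\<lambda>x. LINT y|M. complex_of_real (s x y) * w y)"

definition opnorm :: "'a measure \<Rightarrow> ('a \<Rightarrow> 'a \<Rightarrow> real) \<Rightarrow> real" where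
  "opnorm M s = (SUP w \<in> {w \<in> bmeas M UNIV. supnorm M w \<le> 1}. supnorm M (intop M s w))"

definition Heta :: "real \<Rightarrow> complex set" where
  "Heta \<eta> = {z \<in> upper_half. Im z \<ge> \<eta> \<and> cmod z \<le> 1 / \<eta>}"

text \<open>The set B_eta of functions u : H_eta -> B(X, H) (represented by total functions;
  only their values on H_eta matter).\<close>
definition Beta :: "'a measure \<Rightarrow> ('a \<Rightarrow> 'a \<Rightarrow> real) \<Rightarrow> real \<Rightarrow> (complex \<Rightarrow> 'a \<Rightarrow> complex) set" where
  "Beta M s \<eta> = {u. (\<forall>z\<in>Heta \<eta>. u z \<in> bmeas M upper_half)
      \<and> (\<forall>z\<in>Heta \<eta>. \<forall>x\<in>space M. Im (u z x) \<ge> \<eta>^3 / (2 + opnorm M s)^2)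
      \<and> (\<forall>z\<in>Heta \<eta>. supnorm M (u z) \<le> 1 / \<eta>)}"

definition Phi :: "'a measure \<Rightarrow> ('a \<Rightarrow> real) \<Rightarrow> ('a \<Rightarrow> 'a \<Rightarrow> real)
                   \<Rightarrow> (complex \<Rightarrow> 'a \<Rightarrow> complex) \<Rightarrow> complex \<Rightarrow> 'a \<Rightarrow> complex" where
  "Phi M a s u = (\<lambda>z x. - 1 / (z + complex_of_real (a x) + intop M s (u z) x))"

definition Dist :: "complex \<Rightarrow> complex \<Rightarrow> real" where
  "Dist \<zeta> \<omega> = (cmod (\<zeta> - \<omega>))^2 / (Im \<zeta> * Im \<omega>)"

definition contr_factor :: "real \<Rightarrow> real \<Rightarrow> real" where
  "contr_factor Sn \<eta> = (if Sn = 0 then 0 else 1 / (1 + \<eta>^2 / Sn)^2)"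

end

theory Submission
  imports Defs
begin

(*
  The map zeta |-> -1/zeta preserves D, so at each point
  D(Phi u, Phi w) = |S(u - w)|^2 / ((Im z + Im Su) (Im z + Im Sw)).
  Since s >= 0, Cauchy--Schwarz bounds |S(u - w)|^2 by sup D(u, w) * Im Su * Im Sw, and
  0 <= Im Su, Im Sw <= ||S|| / eta together with Im z >= eta give the factor (1 + eta^2/||S||)^(-2).
  Invariance of B_eta comes from Im(-1/zeta) = Im zeta / |zeta|^2, with Im zeta >= eta and
  |zeta| <= (2 + ||S||) / eta for the denominator zeta = z + a + Su.
  The fixed point is the pointwise limit of the Picard iterates: D between consecutive iterates
  decays geometrically, which controls their Euclidean distance because Im <= 1/eta on B_eta,
  and dominated convergence lets S pass to the limit.
*)

lemma norm_le_supnorm: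
  assumes "bounded (w ` space M)" "x \<in> space M"
  shows "norm (w x) \<le> supnorm M w"
proof -
  from assms(1) obtain B where "\<forall>y\<in>w ` space M. norm y \<le> B" by (auto simp: bounded_iff)
  hence "bdd_above ((\<lambda>x. norm (w x)) ` space M)" by (auto intro!: bdd_aboveI2)
  thus ?thesis unfolding supnorm_def using assms(2) by (rule cSUP_upper2) simp
qed

lemma supnorm_nonneg:
  assumes "bounded (w ` space M)" "space M \<noteq> {}"
  shows "0 \<le> supnorm M w"
  using assms norm_le_supnorm[OF assms(1)] by (meson all_not_in_conv norm_ge_zero order_trans)

lemma supnorm_le:
  assumes "space M \<noteq> {}" "\<And>x. x \<in> space M \<Longrightarrow> norm (w x) \<le> B"
  shows "supnorm M w \<le> B"
  unfolding supnorm_def using assms by (intro cSUP_least) auto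

lemma bmeas_norm_bound:
  assumes "w \<in> bmeas M D"
  obtains B where "0 \<le> B" "\<And>x. x \<in> space M \<Longrightarrow> norm (w x) \<le> B"
proof -
  from assms obtain B where "\<forall>y\<in>w ` space M. norm y \<le> B" by (auto simp: bmeas_def bounded_iff)
  thus ?thesis by (intro that[of "max B 0"]) auto
qed

lemma Dist_nonneg: "0 < Im \<zeta> \<Longrightarrow> 0 < Im \<omega> \<Longrightarrow> 0 \<le> Dist \<zeta> \<omega>"
  by (simp add: Dist_def)

lemma Dist_minus_inverse:
  assumes "0 < Im \<zeta>" "0 < Im \<omega>"
  shows "Dist (- 1 / \<zeta>) (- 1 / \<omega>) = Dist \<zeta> \<omega>"
proof -
  have "\<zeta> \<noteq> 0" "\<omega> \<noteq> 0" using assms by auto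
  hence "- 1 / \<zeta> - - 1 / \<omega> = (\<zeta> - \<omega>) / (\<zeta> * \<omega>)" by (simp add: field_simps)
  hence num: "(cmod (- 1 / \<zeta> - - 1 / \<omega>))^2 = (cmod (\<zeta> - \<omega>))^2 / ((cmod \<zeta>)^2 * (cmod \<omega>)^2)"
    by (simp add: norm_divide norm_mult power_divide power_mult_distrib)
  have den: "Im (- 1 / \<zeta>) = Im \<zeta> / (cmod \<zeta>)^2" "Im (- 1 / \<omega>) = Im \<omega> / (cmod \<omega>)^2"
    by (simp_all add: Im_divide cmod_power2)
  have "0 < cmod \<zeta>" "0 < cmod \<omega>" using \<open>\<zeta> \<noteq> 0\<close> \<open>\<omega> \<noteq> 0\<close> by auto
  thus ?thesis unfolding Dist_def num den using assms by (simp add: field_simps)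
qed

lemma norm_diff_le_Dist:
  assumes "0 < Im \<zeta>" "Im \<zeta> \<le> r" "0 < Im \<omega>" "Im \<omega> \<le> r"
  shows "cmod (\<zeta> - \<omega>) \<le> r * sqrt (Dist \<zeta> \<omega>)"
proof -
  have "(cmod (\<zeta> - \<omega>))^2 = Dist \<zeta> \<omega> * (Im \<zeta> * Im \<omega>)"
    using assms by (simp add: Dist_def)
  also have "\<dots> \<le> Dist \<zeta> \<omega> * r^2"
    using assms Dist_nonneg[of \<zeta> \<omega>] by (intro mult_left_mono) (auto simp: power2_eq_square intro: mult_mono)
  finally have "cmod (\<zeta> - \<omega>) \<le> sqrt (Dist \<zeta> \<omega> * r^2)" by (rule real_le_rsqrt)
  thus ?thesis using assms by (simp add: real_sqrt_mult mult.commute)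
qed

lemma le_AM_GM_param:
  fixes d P Q t :: real
  assumes "0 \<le> P" "0 \<le> Q" "d^2 \<le> P * Q" "0 < t"
  shows "d \<le> (t * P + Q / t) / 2"
proof -
  have "(t * P + Q / t)^2 = (t * P - Q / t)^2 + 4 * ((t * P) * (Q / t))"
    by (simp add: power2_eq_square algebra_simps)
  also have "(t * P) * (Q / t) = P * Q" using assms(4) by simp
  finally have "4 * d^2 \<le> (t * P + Q / t)^2"
    using assms(3) zero_le_power2[of "t * P - Q / t"] by linarith
  hence "(2 * d)^2 \<le> (t * P + Q / t)^2" by (simp add: power_mult_distrib)
  moreover have "0 \<le> t * P + Q / t" using assms by simp
  ultimately have "2 * d \<le> t * P + Q / t" by (rule power2_le_imp_le)
  thus ?thesis by simp
qed

lemma sq_le_mult_if_le_AM_GM: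
  fixes X P Q :: real
  assumes "0 \<le> X" "0 \<le> P" "0 \<le> Q" "\<And>t. 0 < t \<Longrightarrow> X \<le> (t * P + Q / t) / 2"
  shows "X^2 \<le> P * Q"
proof (cases "X = 0")
  case False
  hence X: "0 < X" using assms(1) by simp
  have quad: "2 * t * X \<le> t^2 * P + Q" if t: "0 < t" for t
  proof -
    have "2 * t * X \<le> t * (t * P + Q / t)"
      using mult_left_mono[OF assms(4)[OF t], of "2 * t"] t by simp
    also have "\<dots> = t^2 * P + Q" using t by (simp add: power2_eq_square algebra_simps)
    finally show ?thesis .
  qed
  show ?thesis
  proof (cases "P = 0")
    case True
    have "2 * ((Q + 1) / X) * X \<le> Q" using quad[of "(Q + 1) / X"] X assms(3) True by simp
    thus ?thesis using X assms(3) by simp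
  next
    case False
    hence P: "0 < P" using assms(2) by simp
    have "2 * (X / P) * X \<le> (X / P)^2 * P + Q" using quad[of "X / P"] X P by simp
    hence "2 * (X^2 / P) \<le> X^2 / P + Q" using P by (simp add: power2_eq_square)
    hence "X^2 / P \<le> Q" by simp
    thus ?thesis using P by (simp add: divide_le_eq mult.commute)
  qed
qed (use assms(2,3) in simp)

(* Cauchy--Schwarz: integrate the pointwise bound |h| <= (t f + g / t) / 2 and optimise over t. *)
lemma norm_integral_sq_le:
  fixes h :: "'a \<Rightarrow> 'b::{banach, second_countable_topology}"
  assumes "integrable M f" "integrable M g" "AE x in M. 0 \<le> f x" "AE x in M. 0 \<le> g x"
    and "AE x in M. (norm (h x))^2 \<le> f x * g x"
  shows "(norm (integral\<^sup>L M h))^2 \<le> integral\<^sup>L M f * integral\<^sup>L M g"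
proof (rule sq_le_mult_if_le_AM_GM)
  fix t :: real assume t: "0 < t"
  have "norm (integral\<^sup>L M h) \<le> (\<integral>x. norm (h x) \<partial>M)" by (rule integral_norm_bound)
  also have "\<dots> \<le> (\<integral>x. (t * f x + g x / t) / 2 \<partial>M)"
  proof (rule integral_mono_AE')
    show "AE x in M. norm (h x) \<le> (t * f x + g x / t) / 2"
      using assms(3-5) by eventually_elim (metis le_AM_GM_param t)
    show "AE x in M. 0 \<le> (t * f x + g x / t) / 2"
      using assms(3,4) by eventually_elim (use t in simp)
  qed (use assms(1,2) in simp)
  also have "\<dots> = (t * integral\<^sup>L M f + integral\<^sup>L M g / t) / 2"
    using assms(1,2) by simp
  finally show "norm (integral\<^sup>L M h) \<le> (t * integral\<^sup>L M f + integral\<^sup>L M g / t) / 2" .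
qed (use assms in \<open>auto intro: integral_nonneg_AE\<close>)

lemma contr_factor_nonneg: "0 \<le> contr_factor N \<eta>"
  by (simp add: contr_factor_def)

lemma contr_factor_lt_1:
  assumes "0 \<le> N" "0 < \<eta>"
  shows "contr_factor N \<eta> < 1"
proof (cases "N = 0")
  case False
  hence "1 < 1 + \<eta>^2 / N" using assms by simp
  hence "1 < (1 + \<eta>^2 / N)^2" by (simp add: one_less_power)
  thus ?thesis using False by (simp add: contr_factor_def divide_less_eq)
qed (simp add: contr_factor_def)

lemma mult_frac_le_contr_factor:
  fixes A B y N \<eta> :: real
  assumes "0 < \<eta>" "\<eta> \<le> y" "0 \<le> A" "A \<le> N / \<eta>" "0 \<le> B" "B \<le> N / \<eta>"
  shows "A * B / ((y + A) * (y + B)) \<le> contr_factor N \<eta>"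
proof (cases "N = 0")
  case True
  thus ?thesis using assms by (simp add: contr_factor_def)
next
  case False
  have "0 \<le> N / \<eta>" using assms by linarith
  hence N: "0 < N" using False assms(1) by (simp add: zero_le_divide_iff)
  have frac_le: "X / (y + X) \<le> N / (\<eta>^2 + N)" if "0 \<le> X" "X \<le> N / \<eta>" for X
  proof -
    have "X * \<eta>^2 \<le> N * \<eta>"
      using that assms(1) by (simp add: power2_eq_square field_simps mult_right_mono)
    also have "\<dots> \<le> N * y" using assms N by simp
    finally have "X * (\<eta>^2 + N) \<le> N * (y + X)" by (simp add: algebra_simps)
    moreover have "0 < y + X" using that assms by linarith
    moreover have "0 < \<eta>^2 + N" using N by (simp add: add_nonneg_pos)
    ultimately show ?thesis by (simp add: divide_simps)
  qed
  have "A * B / ((y + A) * (y + B)) = (A / (y + A)) * (B / (y + B))" by simp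
  also have "\<dots> \<le> (N / (\<eta>^2 + N)) * (N / (\<eta>^2 + N))"
    using frac_le[of A] frac_le[of B] assms N by (intro mult_mono) auto
  also have "\<dots> = contr_factor N \<eta>"
    using N by (simp add: contr_factor_def field_simps power2_eq_square)
  finally show ?thesis .
qed

lemma convergent_if_norm_diff_le_geometric:
  fixes f :: "nat \<Rightarrow> 'a::banach"
  assumes "\<And>n. norm (f n - f (Suc n)) \<le> C * r ^ n" "0 \<le> r" "r < 1"
  shows "convergent f"
proof -
  have "summable (\<lambda>n. f (Suc n) - f n)"
    using assms by (intro summable_comparison_test'[where N=0, OF summable_mult[OF summable_geometric]])
      (auto simp: norm_minus_commute)
  hence "convergent (\<lambda>n. f 0 + (\<Sum>i<n. f (Suc i) - f i))"
    by (simp add: summable_iff_convergent convergent_add_const_iff)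
  thus ?thesis by (simp add: sum_lessThan_telescope)
qed

lemma cSUP2_upper:
  fixes f :: "'z \<Rightarrow> 'x \<Rightarrow> real"
  assumes "\<And>z x. z \<in> Z \<Longrightarrow> x \<in> X \<Longrightarrow> f z x \<le> B" "z \<in> Z" "x \<in> X"
  shows "f z x \<le> (SUP z\<in>Z. SUP x\<in>X. f z x)"
proof -
  have "(SUP x\<in>X. f z' x) \<le> B" if "z' \<in> Z" for z'
    using assms that by (intro cSUP_least) auto
  hence "bdd_above ((\<lambda>z. SUP x\<in>X. f z x) ` Z)" by (auto intro!: bdd_aboveI2)
  moreover have "bdd_above (f z ` X)" using assms by (auto intro!: bdd_aboveI2)
  ultimately show ?thesis
    using assms by (intro cSUP_upper2[where x=z]) (auto intro: cSUP_upper2[where x=x])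
qed

lemma cSUP2_least:
  fixes f :: "'z \<Rightarrow> 'x \<Rightarrow> real"
  assumes "Z \<noteq> {}" "X \<noteq> {}" "\<And>z x. z \<in> Z \<Longrightarrow> x \<in> X \<Longrightarrow> f z x \<le> C"
  shows "(SUP z\<in>Z. SUP x\<in>X. f z x) \<le> C"
  using assms by (intro cSUP_least) auto

locale nonneg_kernel = prob_space M for M :: "'a measure" +
  fixes s :: "'a \<Rightarrow> 'a \<Rightarrow> real"
  assumes kernel_bmeas: "(\<lambda>(x, y). s x y) \<in> bmeas (M \<Otimes>\<^sub>M M) {0..}"
begin

definition kernel_bound :: real where
  "kernel_bound = supnorm (M \<Otimes>\<^sub>M M) (\<lambda>(x, y). s x y)"

lemma kernel_nonneg: "x \<in> space M \<Longrightarrow> y \<in> space M \<Longrightarrow> 0 \<le> s x y"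
  using kernel_bmeas by (auto simp: bmeas_def space_pair_measure)

lemma kernel_le_bound: "x \<in> space M \<Longrightarrow> y \<in> space M \<Longrightarrow> s x y \<le> kernel_bound"
  using kernel_bmeas norm_le_supnorm[of "\<lambda>(x, y). s x y" "M \<Otimes>\<^sub>M M" "(x, y)"]
  by (auto simp: bmeas_def space_pair_measure kernel_bound_def)

lemma kernel_bound_nonneg: "0 \<le> kernel_bound"
  using not_empty kernel_nonneg kernel_le_bound by (meson ex_in_conv order_trans)

lemma kernel_row_measurable: "x \<in> space M \<Longrightarrow> s x \<in> borel_measurable M"
  using measurable_Pair2[of "\<lambda>(x, y). s x y"] kernel_bmeas by (auto simp: bmeas_def)

lemma norm_kernel_mult_le:
  assumes "x \<in> space M" "y \<in> space M" "norm (w y) \<le> B"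
  shows "norm (complex_of_real (s x y) * w y) \<le> kernel_bound * B"
proof -
  have "norm (complex_of_real (s x y) * w y) = s x y * norm (w y)"
    using kernel_nonneg[OF assms(1,2)] by (simp add: norm_mult)
  also have "\<dots> \<le> kernel_bound * B"
    using assms kernel_le_bound[OF assms(1,2)] kernel_nonneg[OF assms(1,2)]
    by (intro mult_mono) auto
  finally show ?thesis .
qed

lemma integrable_kernel_row:
  assumes "w \<in> bmeas M D" "x \<in> space M"
  shows "integrable M (\<lambda>y. complex_of_real (s x y) * w y)"
proof -
  obtain B where "\<And>y. y \<in> space M \<Longrightarrow> norm (w y) \<le> B" using bmeas_norm_bound[OF assms(1)] by blast
  moreover have [measurable]: "w \<in> borel_measurable M" "s x \<in> borel_measurable M"
    using assms kernel_row_measurable by (auto simp: bmeas_def)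
  ultimately show ?thesis
    using assms(2) by (intro integrable_const_bound[where B="kernel_bound * B"] AE_I2 norm_kernel_mult_le) auto
qed

lemma norm_intop_le:
  assumes "\<And>y. y \<in> space M \<Longrightarrow> norm (w y) \<le> B" "x \<in> space M"
  shows "norm (intop M s w x) \<le> kernel_bound * B"
proof -
  have "norm (intop M s w x) \<le> (LINT y|M. norm (complex_of_real (s x y) * w y))"
    unfolding intop_def by (rule integral_norm_bound)
  also have "\<dots> \<le> (LINT y|M. kernel_bound * B)"
    using assms not_empty kernel_bound_nonneg
    by (intro integral_mono_AE' AE_I2 norm_kernel_mult_le)
       (auto intro!: mult_nonneg_nonneg intro: order_trans[OF norm_ge_zero])
  also have "\<dots> = kernel_bound * B" by (simp add: prob_space)
  finally show ?thesis .
qed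

lemma intop_measurable:
  assumes "w \<in> borel_measurable M"
  shows "intop M s w \<in> borel_measurable M"
proof -
  have "(\<lambda>p. complex_of_real ((\<lambda>(x, y). s x y) p) * w (snd p)) \<in> borel_measurable (M \<Otimes>\<^sub>M M)"
    using kernel_bmeas assms by (auto simp: bmeas_def)
  thus ?thesis
    unfolding intop_def by (intro borel_measurable_lebesgue_integral) (simp add: case_prod_beta')
qed

lemma intop_bmeas:
  assumes "w \<in> bmeas M D"
  shows "intop M s w \<in> bmeas M UNIV"
proof -
  obtain B where "\<And>y. y \<in> space M \<Longrightarrow> norm (w y) \<le> B" using bmeas_norm_bound[OF assms] by blast
  hence "bounded (intop M s w ` space M)"
    unfolding bounded_iff using norm_intop_le by blast
  thus ?thesis using intop_measurable assms by (auto simp: bmeas_def)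
qed

lemma intop_cong: "(\<And>y. y \<in> space M \<Longrightarrow> u y = w y) \<Longrightarrow> intop M s u = intop M s w"
  unfolding intop_def by (intro ext Bochner_Integration.integral_cong) auto

lemma intop_diff:
  assumes "u \<in> bmeas M D" "w \<in> bmeas M D'" "x \<in> space M"
  shows "intop M s u x - intop M s w x = intop M s (\<lambda>y. u y - w y) x"
  using integrable_kernel_row[OF assms(1,3)] integrable_kernel_row[OF assms(2,3)]
  by (simp add: intop_def algebra_simps)

lemma Im_intop:
  assumes "w \<in> bmeas M D" "x \<in> space M"
  shows "Im (intop M s w x) = (LINT y|M. s x y * Im (w y))"
  unfolding intop_def using integral_Im[OF integrable_kernel_row[OF assms]] by simp

lemma Im_intop_nonneg:
  assumes "w \<in> bmeas M upper_half" "x \<in> space M"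
  shows "0 \<le> Im (intop M s w x)"
  unfolding Im_intop[OF assms]
  using assms kernel_nonneg by (intro integral_nonneg_AE AE_I2) (auto simp: bmeas_def upper_half_def)

lemma opnorm_bdd_above:
  "bdd_above ((\<lambda>w. supnorm M (intop M s w)) ` {w \<in> bmeas M UNIV. supnorm M w \<le> 1})"
proof (rule bdd_aboveI2)
  fix w :: "'a \<Rightarrow> complex" assume "w \<in> {w \<in> bmeas M UNIV. supnorm M w \<le> 1}"
  hence "\<And>y. y \<in> space M \<Longrightarrow> norm (w y) \<le> 1"
    using norm_le_supnorm[of w M] by (force simp: bmeas_def)
  thus "supnorm M (intop M s w) \<le> kernel_bound"
    using norm_intop_le[of w 1] not_empty by (intro supnorm_le) auto
qed

lemma le_opnorm:
  assumes "w \<in> bmeas M UNIV" "supnorm M w \<le> 1"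
  shows "supnorm M (intop M s w) \<le> opnorm M s"
  unfolding opnorm_def using assms by (intro cSUP_upper opnorm_bdd_above) simp

lemma opnorm_nonneg: "0 \<le> opnorm M s"
proof -
  have zero: "(\<lambda>_. 0::complex) \<in> bmeas M UNIV" by (simp add: bmeas_def image_constant_conv)
  have "0 \<le> supnorm M (intop M s (\<lambda>_. 0::complex))"
    using intop_bmeas[OF zero] not_empty by (intro supnorm_nonneg) (simp_all add: bmeas_def)
  also have "\<dots> \<le> opnorm M s"
    using zero not_empty by (intro le_opnorm) (simp_all add: supnorm_def image_constant_conv)
  finally show ?thesis .
qed

lemma norm_intop_le_opnorm:
  assumes w: "w \<in> bmeas M D" and x: "x \<in> space M"
  shows "norm (intop M s w x) \<le> opnorm M s * supnorm M w"
proof -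
  define m where "m = supnorm M w"
  have wb: "bounded (w ` space M)" and [measurable]: "w \<in> borel_measurable M"
    using w by (auto simp: bmeas_def)
  have w_le: "\<And>y. y \<in> space M \<Longrightarrow> norm (w y) \<le> m"
    unfolding m_def by (rule norm_le_supnorm[OF wb])
  show ?thesis
  proof (cases "m = 0")
    case True
    hence "intop M s w x = intop M s (\<lambda>_. 0) x"
      using w_le by (intro fun_cong[OF intop_cong]) auto
    thus ?thesis using True by (simp add: intop_def m_def)
  next
    case False
    hence m: "0 < m" using supnorm_nonneg[OF wb not_empty] by (simp add: m_def)
    define v where "v y = w y / complex_of_real m" for y
    have "bounded (v ` space M)"
      unfolding bounded_iff v_def using w_le m by (intro exI[of _ 1]) (auto simp: norm_divide)
    moreover have "v \<in> borel_measurable M" unfolding v_def by measurable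
    ultimately have v: "v \<in> bmeas M UNIV" by (simp add: bmeas_def)
    have "supnorm M v \<le> 1"
      using not_empty w_le m by (intro supnorm_le) (auto simp: v_def norm_divide)
    hence "norm (intop M s v x) \<le> opnorm M s"
      using le_opnorm[OF v] norm_le_supnorm[of "intop M s v" M x] intop_bmeas[OF v] x
      by (auto simp: bmeas_def)
    moreover have "intop M s v x = intop M s w x / complex_of_real m"
      by (simp add: intop_def v_def)
    ultimately show ?thesis using m by (simp add: norm_divide divide_le_eq m_def mult.commute)
  qed
qed

lemma norm_intop_diff_sq_le:
  assumes u: "u \<in> bmeas M upper_half" and w: "w \<in> bmeas M upper_half" and x: "x \<in> space M"
    and K: "\<And>y. y \<in> space M \<Longrightarrow> Dist (u y) (w y) \<le> K"
  shows "(cmod (intop M s u x - intop M s w x))^2 \<le> K * Im (intop M s u x) * Im (intop M s w x)"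
proof -
  have Im_pos: "0 < Im (u y)" "0 < Im (w y)" if "y \<in> space M" for y
    using u w that by (auto simp: bmeas_def upper_half_def)
  have "0 \<le> K" using not_empty K Dist_nonneg[OF Im_pos] by (meson ex_in_conv order_trans)
  have pointwise: "(cmod (complex_of_real (s x y) * (u y - w y)))^2
      \<le> (K * (s x y * Im (u y))) * (s x y * Im (w y))" if y: "y \<in> space M" for y
  proof -
    have "(cmod (u y - w y))^2 = Dist (u y) (w y) * (Im (u y) * Im (w y))"
      using Im_pos[OF y] by (simp add: Dist_def)
    also have "\<dots> \<le> K * (Im (u y) * Im (w y))"
      using K[OF y] Im_pos[OF y] by (intro mult_right_mono) auto
    finally have "(s x y)^2 * (cmod (u y - w y))^2 \<le> (s x y)^2 * (K * (Im (u y) * Im (w y)))"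
      by (intro mult_left_mono) auto
    thus ?thesis by (simp add: norm_mult power_mult_distrib power2_eq_square mult_ac)
  qed
  have "(cmod (intop M s u x - intop M s w x))^2
      = (cmod (LINT y|M. complex_of_real (s x y) * (u y - w y)))^2"
    unfolding intop_diff[OF u w x] by (simp add: intop_def)
  also have "\<dots> \<le> (LINT y|M. K * (s x y * Im (u y))) * (LINT y|M. s x y * Im (w y))"
    using integrable_Im[OF integrable_kernel_row[OF u x]] integrable_Im[OF integrable_kernel_row[OF w x]]
      \<open>0 \<le> K\<close> kernel_nonneg[OF x] Im_pos[THEN less_imp_le] pointwise
    by (intro norm_integral_sq_le AE_I2) auto
  also have "\<dots> = K * Im (intop M s u x) * Im (intop M s w x)"
    by (simp add: Im_intop[OF u x] Im_intop[OF w x])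
  finally show ?thesis .
qed

lemma intop_tendsto:
  assumes "\<And>n. f n \<in> borel_measurable M" "g \<in> borel_measurable M"
    and "\<And>y. y \<in> space M \<Longrightarrow> (\<lambda>n. f n y) \<longlonglongrightarrow> g y"
    and "\<And>n y. y \<in> space M \<Longrightarrow> norm (f n y) \<le> B" and x: "x \<in> space M"
  shows "(\<lambda>n. intop M s (f n) x) \<longlonglongrightarrow> intop M s g x"
  unfolding intop_def
proof (rule integral_dominated_convergence[where w="\<lambda>_. kernel_bound * B"])
  have [measurable]: "s x \<in> borel_measurable M" by (rule kernel_row_measurable[OF x])
  show "(\<lambda>y. complex_of_real (s x y) * g y) \<in> borel_measurable M" using assms(2) by measurable
  show "(\<lambda>y. complex_of_real (s x y) * f n y) \<in> borel_measurable M" for n using assms(1) by measurable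
qed (use assms norm_kernel_mult_le in \<open>auto intro!: AE_I2 tendsto_mult\<close>)

end

locale resolvent_setting = nonneg_kernel M s for M :: "'a measure" and s +
  fixes a :: "'a \<Rightarrow> real" and \<eta> :: real
  assumes a_bmeas: "a \<in> bmeas M UNIV"
    and eta_pos: "0 < \<eta>" and eta_lt_1: "\<eta> < 1" and eta_supnorm_a: "\<eta> * supnorm M a < 1"
begin

definition Im_floor :: real where
  "Im_floor = \<eta>^3 / (2 + opnorm M s)^2"

lemma Im_floor_pos: "0 < Im_floor"
  using eta_pos opnorm_nonneg by (simp add: Im_floor_def)

lemma Heta_D:
  assumes "z \<in> Heta \<eta>"
  shows "\<eta> \<le> Im z" "cmod z \<le> 1 / \<eta>"
  using assms by (auto simp: Heta_def)

lemma i_eta_in_Heta: "\<i> * complex_of_real \<eta> \<in> Heta \<eta>"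
proof -
  have "\<eta> * \<eta> \<le> 1" using eta_pos eta_lt_1 by (intro mult_le_one) auto
  thus ?thesis using eta_pos by (simp add: Heta_def upper_half_def norm_mult le_divide_eq)
qed

lemma Beta_D:
  assumes "u \<in> Beta M s \<eta>" "z \<in> Heta \<eta>"
  shows "u z \<in> bmeas M upper_half" "supnorm M (u z) \<le> 1 / \<eta>"
    and "x \<in> space M \<Longrightarrow> Im_floor \<le> Im (u z x)"
    and "x \<in> space M \<Longrightarrow> cmod (u z x) \<le> 1 / \<eta>"
  using assms norm_le_supnorm[of "u z" M x] by (force simp: Beta_def bmeas_def Im_floor_def)+

lemma BetaI:
  assumes "\<And>z. z \<in> Heta \<eta> \<Longrightarrow> u z \<in> borel_measurable M"
    and "\<And>z x. z \<in> Heta \<eta> \<Longrightarrow> x \<in> space M \<Longrightarrow> Im_floor \<le> Im (u z x) \<and> cmod (u z x) \<le> 1 / \<eta>"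
  shows "u \<in> Beta M s \<eta>"
  unfolding Beta_def bmeas_def upper_half_def Im_floor_def[symmetric] using assms Im_floor_pos not_empty
  by (auto simp: bounded_iff intro!: supnorm_le) (meson order_less_le_trans)

definition Phi_denom :: "(complex \<Rightarrow> 'a \<Rightarrow> complex) \<Rightarrow> complex \<Rightarrow> 'a \<Rightarrow> complex" where
  "Phi_denom u z x = z + complex_of_real (a x) + intop M s (u z) x"

lemma Phi_eq: "Phi M a s u z x = - 1 / Phi_denom u z x"
  by (simp add: Phi_def Phi_denom_def)

lemma Im_intop_bounds:
  assumes "u \<in> Beta M s \<eta>" "z \<in> Heta \<eta>" "x \<in> space M"
  shows "0 \<le> Im (intop M s (u z) x)" "Im (intop M s (u z) x) \<le> opnorm M s / \<eta>"
    and "cmod (intop M s (u z) x) \<le> opnorm M s / \<eta>"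
proof -
  note u = Beta_D[OF assms(1,2)]
  show "0 \<le> Im (intop M s (u z) x)" by (rule Im_intop_nonneg[OF u(1) assms(3)])
  show norm_le: "cmod (intop M s (u z) x) \<le> opnorm M s / \<eta>"
    using norm_intop_le_opnorm[OF u(1) assms(3)] mult_left_mono[OF u(2) opnorm_nonneg] by simp
  thus "Im (intop M s (u z) x) \<le> opnorm M s / \<eta>"
    using abs_Im_le_cmod[of "intop M s (u z) x"] by linarith
qed

lemma Phi_denom_bounds:
  assumes "u \<in> Beta M s \<eta>" "z \<in> Heta \<eta>" "x \<in> space M"
  shows "\<eta> \<le> Im (Phi_denom u z x)" "cmod (Phi_denom u z x) \<le> (2 + opnorm M s) / \<eta>"
proof -
  note S = Im_intop_bounds[OF assms]
  show "\<eta> \<le> Im (Phi_denom u z x)" using S(1) Heta_D[OF assms(2)] by (simp add: Phi_denom_def)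
  have "\<eta> * \<bar>a x\<bar> \<le> \<eta> * supnorm M a"
    using norm_le_supnorm[of a M x] a_bmeas assms(3) eta_pos by (auto simp: bmeas_def)
  hence "\<eta> * \<bar>a x\<bar> \<le> 1" using eta_supnorm_a by linarith
  hence "\<bar>a x\<bar> \<le> 1 / \<eta>" using eta_pos by (simp add: field_simps)
  hence "cmod (Phi_denom u z x) \<le> 1 / \<eta> + 1 / \<eta> + opnorm M s / \<eta>"
    unfolding Phi_denom_def using Heta_D(2)[OF assms(2)] S(3)
    by (smt (verit) norm_of_real norm_triangle_ineq)
  thus "cmod (Phi_denom u z x) \<le> (2 + opnorm M s) / \<eta>" by (simp add: add_divide_distrib)
qed

lemma Phi_in_Beta:
  assumes u: "u \<in> Beta M s \<eta>"
  shows "Phi M a s u \<in> Beta M s \<eta>"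
proof (rule BetaI)
  fix z assume z: "z \<in> Heta \<eta>"
  have [measurable]: "intop M s (u z) \<in> borel_measurable M" "a \<in> borel_measurable M"
    using Beta_D(1)[OF u z] a_bmeas by (auto intro: intop_measurable simp: bmeas_def)
  show "Phi M a s u z \<in> borel_measurable M" unfolding Phi_def by measurable
  fix x assume x: "x \<in> space M"
  note D = Phi_denom_bounds[OF u z x]
  have "\<eta> \<le> cmod (Phi_denom u z x)" using D(1) abs_Im_le_cmod[of "Phi_denom u z x"] by linarith
  hence "cmod (Phi M a s u z x) \<le> 1 / \<eta>"
    using eta_pos by (simp add: Phi_eq norm_divide frac_le)
  moreover have "Im_floor = \<eta> / ((2 + opnorm M s) / \<eta>)^2"
    using eta_pos by (simp add: Im_floor_def power2_eq_square power3_eq_cube)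
  moreover have "\<dots> \<le> Im (Phi_denom u z x) / (cmod (Phi_denom u z x))^2"
    using D \<open>\<eta> \<le> cmod _\<close> eta_pos by (intro frac_le power_mono) auto
  moreover have "\<dots> = Im (Phi M a s u z x)" by (simp add: Phi_eq Im_divide cmod_power2)
  ultimately show "Im_floor \<le> Im (Phi M a s u z x) \<and> cmod (Phi M a s u z x) \<le> 1 / \<eta>" by simp
qed

lemma Dist_Phi:
  assumes "u \<in> Beta M s \<eta>" "w \<in> Beta M s \<eta>" "z \<in> Heta \<eta>" "x \<in> space M"
  shows "Dist (Phi M a s u z x) (Phi M a s w z x)
     = (cmod (intop M s (u z) x - intop M s (w z) x))^2 /
       ((Im z + Im (intop M s (u z) x)) * (Im z + Im (intop M s (w z) x)))"
proof -
  have pos: "0 < Im (Phi_denom u z x)" "0 < Im (Phi_denom w z x)"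
    using Phi_denom_bounds(1)[OF assms(1,3,4)] Phi_denom_bounds(1)[OF assms(2,3,4)] eta_pos by linarith+
  show ?thesis unfolding Phi_eq Dist_minus_inverse[OF pos] by (simp add: Dist_def Phi_denom_def)
qed

lemma Dist_Phi_le:
  assumes u: "u \<in> Beta M s \<eta>" and w: "w \<in> Beta M s \<eta>" and z: "z \<in> Heta \<eta>" and x: "x \<in> space M"
    and K: "\<And>y. y \<in> space M \<Longrightarrow> Dist (u z y) (w z y) \<le> K"
  shows "Dist (Phi M a s u z x) (Phi M a s w z x) \<le> contr_factor (opnorm M s) \<eta> * K"
proof -
  define A where "A = Im (intop M s (u z) x)"
  define B where "B = Im (intop M s (w z) x)"
  have "0 \<le> K"
    using K not_empty Dist_nonneg Beta_D(3)[OF u z] Beta_D(3)[OF w z] Im_floor_pos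
    by (meson ex_in_conv order_less_le_trans order_trans)
  have A: "0 \<le> A" "A \<le> opnorm M s / \<eta>" and B: "0 \<le> B" "B \<le> opnorm M s / \<eta>"
    using Im_intop_bounds[OF u z x] Im_intop_bounds[OF w z x] by (simp_all add: A_def B_def)
  have "(cmod (intop M s (u z) x - intop M s (w z) x))^2 \<le> K * A * B"
    unfolding A_def B_def using K by (intro norm_intop_diff_sq_le Beta_D(1) u w z x)
  moreover have "0 < (Im z + A) * (Im z + B)" using Heta_D(1)[OF z] eta_pos A B by simp
  ultimately have "Dist (Phi M a s u z x) (Phi M a s w z x) \<le> K * A * B / ((Im z + A) * (Im z + B))"
    unfolding Dist_Phi[OF u w z x] A_def[symmetric] B_def[symmetric] by (simp add: divide_right_mono)
  also have "\<dots> = K * (A * B / ((Im z + A) * (Im z + B)))" by simp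
  also have "\<dots> \<le> K * contr_factor (opnorm M s) \<eta>"
    using mult_frac_le_contr_factor[OF eta_pos Heta_D(1)[OF z] A B] \<open>0 \<le> K\<close> by (rule mult_left_mono)
  finally show ?thesis by (simp add: mult.commute)
qed

definition Dist_sup :: "(complex \<Rightarrow> 'a \<Rightarrow> complex) \<Rightarrow> (complex \<Rightarrow> 'a \<Rightarrow> complex) \<Rightarrow> real" where
  "Dist_sup u w = (SUP z\<in>Heta \<eta>. SUP x\<in>space M. Dist (u z x) (w z x))"

lemma Dist_bounded_on_Beta:
  assumes u: "u \<in> Beta M s \<eta>" and w: "w \<in> Beta M s \<eta>" and z: "z \<in> Heta \<eta>" and x: "x \<in> space M"
  shows "Dist (u z x) (w z x) \<le> (2 / \<eta>)^2 / Im_floor^2"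
proof -
  have "cmod (u z x - w z x) \<le> 2 / \<eta>"
    using norm_triangle_ineq4[of "u z x" "w z x"] Beta_D(4)[OF u z x] Beta_D(4)[OF w z x] by simp
  moreover have "Im_floor * Im_floor \<le> Im (u z x) * Im (w z x)"
    using Beta_D(3)[OF u z x] Beta_D(3)[OF w z x] Im_floor_pos by (intro mult_mono) auto
  ultimately show ?thesis unfolding Dist_def
    using Im_floor_pos by (intro frac_le power_mono) (auto simp: power2_eq_square)
qed

lemma Dist_le_Dist_sup:
  assumes "u \<in> Beta M s \<eta>" "w \<in> Beta M s \<eta>" "z \<in> Heta \<eta>" "x \<in> space M"
  shows "Dist (u z x) (w z x) \<le> Dist_sup u w"
  unfolding Dist_sup_def using assms Dist_bounded_on_Beta[OF assms(1,2)] by (intro cSUP2_upper)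

lemma Dist_sup_nonneg:
  assumes "u \<in> Beta M s \<eta>" "w \<in> Beta M s \<eta>"
  shows "0 \<le> Dist_sup u w"
proof -
  obtain x where x: "x \<in> space M" using not_empty by blast
  have "0 < Im (u z x)" "0 < Im (w z x)" if "z \<in> Heta \<eta>" for z
    using Beta_D(3)[OF assms(1) that x] Beta_D(3)[OF assms(2) that x] Im_floor_pos by linarith+
  thus ?thesis
    using Dist_nonneg Dist_le_Dist_sup[OF assms i_eta_in_Heta x] i_eta_in_Heta by (meson order_trans)
qed

lemma Dist_sup_Phi_le:
  assumes u: "u \<in> Beta M s \<eta>" and w: "w \<in> Beta M s \<eta>"
  shows "Dist_sup (Phi M a s u) (Phi M a s w) \<le> contr_factor (opnorm M s) \<eta> * Dist_sup u w"
  unfolding Dist_sup_def[of "Phi M a s u"] using i_eta_in_Heta not_empty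
  by (intro cSUP2_least Dist_Phi_le[OF u w] Dist_le_Dist_sup[OF u w]) auto

lemma Phi_cong:
  "(\<And>y. y \<in> space M \<Longrightarrow> u z y = w z y) \<Longrightarrow> Phi M a s u z = Phi M a s w z"
  unfolding Phi_def using intop_cong[of "u z" "w z"] by simp

lemma fixed_point_unique:
  assumes v: "v \<in> Beta M s \<eta>" "\<And>z. z \<in> Heta \<eta> \<Longrightarrow> v z = Phi M a s v z"
    and w: "w \<in> Beta M s \<eta>" "\<And>z. z \<in> Heta \<eta> \<Longrightarrow> w z = Phi M a s w z"
    and z: "z \<in> Heta \<eta>"
  shows "v z = w z"
proof -
  have "Dist_sup v w = Dist_sup (Phi M a s v) (Phi M a s w)"
    unfolding Dist_sup_def using v(2) w(2) by (intro SUP_cong) auto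
  also have "\<dots> \<le> contr_factor (opnorm M s) \<eta> * Dist_sup v w" by (rule Dist_sup_Phi_le[OF v(1) w(1)])
  finally have "Dist_sup v w \<le> 0"
    using contr_factor_lt_1[OF opnorm_nonneg eta_pos] Dist_sup_nonneg[OF v(1) w(1)]
    by (simp add: mult_le_cancel_right1)
  have "v z y = w z y" if y: "y \<in> space M" for y
  proof -
    have "Dist (v z y) (w z y) \<le> 0" using Dist_le_Dist_sup[OF v(1) w(1) z y] \<open>Dist_sup v w \<le> 0\<close> by simp
    moreover have "0 < Im (v z y)" "0 < Im (w z y)"
      using Beta_D(3)[OF v(1) z y] Beta_D(3)[OF w(1) z y] Im_floor_pos by linarith+
    ultimately show ?thesis
      by (simp add: Dist_def divide_le_0_iff) (meson mult_pos_pos not_le)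
  qed
  hence "Phi M a s v z = Phi M a s w z" by (rule Phi_cong)
  thus ?thesis using v(2)[OF z] w(2)[OF z] by simp
qed

definition picard :: "nat \<Rightarrow> complex \<Rightarrow> 'a \<Rightarrow> complex" where
  "picard n = (Phi M a s ^^ n) (\<lambda>_ _. \<i> * complex_of_real \<eta>)"

lemma picard_Suc: "picard (Suc n) = Phi M a s (picard n)"
  by (simp add: picard_def)

lemma picard_in_Beta: "picard n \<in> Beta M s \<eta>"
proof (induction n)
  case 0
  have "\<eta>^2 \<le> (2 + opnorm M s)^2"
    using eta_pos eta_lt_1 opnorm_nonneg by (intro power_mono) auto
  hence "Im_floor \<le> \<eta>"
    using eta_pos opnorm_nonneg by (simp add: Im_floor_def divide_le_eq power3_eq_cube power2_eq_square)
  moreover have "\<eta> \<le> 1 / \<eta>" using Heta_D(2)[OF i_eta_in_Heta] eta_pos by (simp add: norm_mult)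
  ultimately show ?case
    using eta_pos by (intro BetaI) (simp_all add: picard_def norm_mult)
qed (simp add: picard_Suc Phi_in_Beta)

lemma Dist_sup_picard_le:
  "Dist_sup (picard n) (picard (Suc n)) \<le> contr_factor (opnorm M s) \<eta> ^ n * Dist_sup (picard 0) (picard 1)"
proof (induction n)
  case (Suc n)
  have "Dist_sup (picard (Suc n)) (picard (Suc (Suc n)))
      \<le> contr_factor (opnorm M s) \<eta> * Dist_sup (picard n) (picard (Suc n))"
    using Dist_sup_Phi_le[OF picard_in_Beta[of n] picard_in_Beta[of "Suc n"]] by (simp only: picard_Suc)
  also have "\<dots> \<le> contr_factor (opnorm M s) \<eta> ^ Suc n * Dist_sup (picard 0) (picard 1)"
    using mult_left_mono[OF Suc contr_factor_nonneg] by (simp add: mult.assoc)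
  finally show ?case .
qed simp

lemma picard_norm_diff_le:
  assumes z: "z \<in> Heta \<eta>" and x: "x \<in> space M"
  shows "cmod (picard n z x - picard (Suc n) z x)
    \<le> sqrt (Dist_sup (picard 0) (picard 1)) / \<eta> * sqrt (contr_factor (opnorm M s) \<eta>) ^ n"
proof -
  have Im_le: "0 < Im (picard m z x) \<and> Im (picard m z x) \<le> 1 / \<eta>" for m
    using Beta_D(3,4)[OF picard_in_Beta z x, of m] Im_floor_pos abs_Im_le_cmod[of "picard m z x"]
    by linarith
  have D: "Dist (picard n z x) (picard (Suc n) z x)
      \<le> contr_factor (opnorm M s) \<eta> ^ n * Dist_sup (picard 0) (picard 1)"
    using Dist_le_Dist_sup[OF picard_in_Beta picard_in_Beta z x] Dist_sup_picard_le by (rule order_trans)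
  have "cmod (picard n z x - picard (Suc n) z x) \<le> 1 / \<eta> * sqrt (Dist (picard n z x) (picard (Suc n) z x))"
    using Im_le by (intro norm_diff_le_Dist) auto
  also have "\<dots> \<le> 1 / \<eta> * sqrt (contr_factor (opnorm M s) \<eta> ^ n * Dist_sup (picard 0) (picard 1))"
    using D eta_pos by (intro mult_left_mono real_sqrt_le_mono) auto
  finally show ?thesis
    using eta_pos contr_factor_nonneg by (simp add: real_sqrt_mult real_sqrt_power mult_ac)
qed

definition picard_lim :: "complex \<Rightarrow> 'a \<Rightarrow> complex" where
  "picard_lim z x = lim (\<lambda>n. picard n z x)"

lemma picard_LIMSEQ:
  assumes "z \<in> Heta \<eta>" "x \<in> space M"
  shows "(\<lambda>n. picard n z x) \<longlonglongrightarrow> picard_lim z x"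
proof -
  have "convergent (\<lambda>n. picard n z x)"
    using contr_factor_lt_1[OF opnorm_nonneg eta_pos] contr_factor_nonneg
    by (intro convergent_if_norm_diff_le_geometric[OF picard_norm_diff_le[OF assms]]) simp_all
  thus ?thesis by (simp add: picard_lim_def convergent_LIMSEQ_iff)
qed

lemma picard_lim_in_Beta: "picard_lim \<in> Beta M s \<eta>"
proof (rule BetaI)
  fix z assume z: "z \<in> Heta \<eta>"
  show "picard_lim z \<in> borel_measurable M"
    by (rule borel_measurable_LIMSEQ_metric[where f="\<lambda>n. picard n z"])
       (use Beta_D(1)[OF picard_in_Beta z] picard_LIMSEQ[OF z] in \<open>auto simp: bmeas_def\<close>)
  fix x assume x: "x \<in> space M"
  note lim = picard_LIMSEQ[OF z x]
  have "Im_floor \<le> Im (picard_lim z x)"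
    using Beta_D(3)[OF picard_in_Beta z x] by (intro LIMSEQ_le_const[OF tendsto_Im[OF lim]]) auto
  moreover have "cmod (picard_lim z x) \<le> 1 / \<eta>"
    using Beta_D(4)[OF picard_in_Beta z x] by (intro LIMSEQ_le_const2[OF tendsto_norm[OF lim]]) auto
  ultimately show "Im_floor \<le> Im (picard_lim z x) \<and> cmod (picard_lim z x) \<le> 1 / \<eta>" ..
qed

lemma picard_lim_fixed:
  assumes z: "z \<in> Heta \<eta>" and x: "x \<in> space M"
  shows "picard_lim z x = Phi M a s picard_lim z x"
proof -
  have S: "(\<lambda>n. intop M s (picard n z) x) \<longlonglongrightarrow> intop M s (picard_lim z) x"
    using Beta_D[OF picard_in_Beta z] Beta_D(1)[OF picard_lim_in_Beta z] picard_LIMSEQ[OF z] x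
    by (intro intop_tendsto[where B="1 / \<eta>"]) (auto simp: bmeas_def)
  have "Phi_denom picard_lim z x \<noteq> 0"
    using Phi_denom_bounds(1)[OF picard_lim_in_Beta z x] eta_pos by auto
  hence "(\<lambda>n. - 1 / Phi_denom (picard n) z x) \<longlonglongrightarrow> - 1 / Phi_denom picard_lim z x"
    unfolding Phi_denom_def by (intro tendsto_intros S)
  hence "(\<lambda>n. picard (Suc n) z x) \<longlonglongrightarrow> Phi M a s picard_lim z x"
    by (simp only: picard_Suc Phi_eq)
  moreover have "(\<lambda>n. picard (Suc n) z x) \<longlonglongrightarrow> picard_lim z x"
    using picard_LIMSEQ[OF z x] by (rule LIMSEQ_Suc)
  ultimately show ?thesis using LIMSEQ_unique by blast
qed

(* picard_lim is a fixed point only at points of space M; one more application of Phi, which sees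
   its argument only on space M, gives an exact fixed point. *)
lemma fixed_point_exists:
  "\<exists>u\<in>Beta M s \<eta>. \<forall>z\<in>Heta \<eta>. u z = Phi M a s u z"
proof
  show "Phi M a s picard_lim \<in> Beta M s \<eta>" by (rule Phi_in_Beta[OF picard_lim_in_Beta])
  show "\<forall>z\<in>Heta \<eta>. Phi M a s picard_lim z = Phi M a s (Phi M a s picard_lim) z"
    using picard_lim_fixed by (auto intro: Phi_cong)
qed

end

theorem mainTheorem12:
  fixes M :: "'a measure" and a :: "'a \<Rightarrow> real" and s :: "'a \<Rightarrow> 'a \<Rightarrow> real" and \<eta> :: real
  assumes "prob_space M"
    and "a \<in> bmeas M UNIV"
    and "(\<lambda>(x, y). s x y) \<in> bmeas (M \<Otimes>\<^sub>M M) {0..}"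
    and "\<And>x y. x \<in> space M \<Longrightarrow> y \<in> space M \<Longrightarrow> s x y = s y x"
    and "0 < \<eta>" and "\<eta> < 1" and "\<eta> * supnorm M a < 1"
  shows "(\<forall>u\<in>Beta M s \<eta>. Phi M a s u \<in> Beta M s \<eta>)
    \<and> (\<forall>u\<in>Beta M s \<eta>. \<forall>w\<in>Beta M s \<eta>.
          (SUP z\<in>Heta \<eta>. SUP x\<in>space M. Dist (Phi M a s u z x) (Phi M a s w z x))
            \<le> contr_factor (opnorm M s) \<eta> *
              (SUP z\<in>Heta \<eta>. SUP x\<in>space M. Dist (u z x) (w z x)))
    \<and> (\<exists>u\<in>Beta M s \<eta>. (\<forall>z\<in>Heta \<eta>. u z = Phi M a s u z)
          \<and> (\<forall>v\<in>Beta M s \<eta>. (\<forall>z\<in>Heta \<eta>. v z = Phi M a s v z) \<longrightarrow> (\<forall>z\<in>Heta \<eta>. v z = u z)))"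
proof -
  interpret resolvent_setting M s a \<eta>
    using assms by (simp add: resolvent_setting_def resolvent_setting_axioms_def
        nonneg_kernel_def nonneg_kernel_axioms_def)
  obtain u where u: "u \<in> Beta M s \<eta>" "\<forall>z\<in>Heta \<eta>. u z = Phi M a s u z"
    using fixed_point_exists by blast
  have "\<forall>v\<in>Beta M s \<eta>. (\<forall>z\<in>Heta \<eta>. v z = Phi M a s v z) \<longrightarrow> (\<forall>z\<in>Heta \<eta>. v z = u z)"
    using fixed_point_unique[OF _ _ u(1) u(2)[rule_format]] by blast
  with u show ?thesis
    using Phi_in_Beta Dist_sup_Phi_le unfolding Dist_sup_def by blast
qed

end
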